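(* Let $\mathcal P$, $\widehat U=(\widehat h,\widehat{q^x},\widehat{q^y})$, $\widehat B$, $\widehat u,\widehat v$ and the stochastic Galerkin shallow water system be as in the context. Define $$E(\widehat U)=\tfrac12\big((\widehat{q^x})^\top\widehat u+(\widehat{q^y})^\top\widehat v\big)+\tfrac12 g\|\widehat h\|^2+g\,\widehat h^\top\widehat B,$$ $$H(\widehat U)=\tfrac12\big(\widehat u^\top\mathcal P(\widehat{q^x})\widehat u+\widehat v^\top\mathcal P(\widehat{q^x})\widehat v\big)+g(\widehat{q^x})^\top(\widehat h+\widehat B),$$ $$K(\widehat U)=\tfrac12\big(\widehat v^\top\mathcal P(\widehat{q^y})\widehat v+\widehat u^\top\mathcal P(\widehat{q^y})\widehat u\big)+g(\widehat{q^y})^\top(\widehat h+\widehat B).$$ If $\mathcal P(\widehat h)$ is strictly positive definite, then $(E,H,K)$ is an entropy flux pair for the stochastic Galerkin shallow water system, i.e. $E$ is convex in $\widehat U$ and every smooth solution satisfies $E(\widehat U)_t+H(\widehat U)_x+K(\widehat U)_y=0$.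
   Context: Let $\xi$ be a random variable in $\mathbb R^d$ with density $\rho$ having finite moments of all orders, and let $\phi_1\equiv1,\phi_2,\dots,\phi_K$ be polynomials orthonormal in $L^2_\rho$. For $k=1,\dots,K$ let $\mathcal M_k\in\mathbb R^{K\times K}$ with $(\mathcal M_k)_{l,m}=\int\phi_k\phi_l\phi_m\rho$, and for $\widehat z\in\mathbb R^K$ set $\mathcal P(\widehat z)=\sum_{k=1}^K\widehat z_k\mathcal M_k$ (a symmetric matrix). Let $g>0$. The stochastic Galerkin (SG) shallow water system is $\widehat U_t+\widehat F(\widehat U)_x+\widehat G(\widehat U)_y=\widehat S(\widehat U)$ for $\widehat U(x,y,t)=(\widehat h^\top,(\widehat{q^x})^\top,(\widehat{q^y})^\top)^\top\in\mathbb R^{3K}$, with a time-independent bottom coefficient vector $\widehat B(x,y)\in\mathbb R^K$, where $\widehat F(\widehat U)=\big(\widehat{q^x};\ \mathcal P(\widehat{q^x})\mathcal P^{-1}(\widehat h)\widehat{q^x}+\tfrac12 g\mathcal P(\widehat h)\widehat h;\ \mathcal P(\widehat{q^x})\mathcal P^{-1}(\widehat h)\widehat{q^y}\big)$, $\widehat G(\widehat U)=\big(\widehat{q^y};\ \mathcal P(\widehat{q^y})\mathcal P^{-1}(\widehat h)\widehat{q^x};\ \mathcal P(\widehat{q^y})\mathcal P^{-1}(\widehat h)\widehat{q^y}+\tfrac12 g\mathcal P(\widehat h)\widehat h\big)$, $\widehat S(\widehat U)=\big(0;\ -g\mathcal P(\widehat h)\widehat B_x;\ -g\mathcal P(\widehat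 h)\widehat B_y\big)$ (semicolons separate $K$-blocks). When $\mathcal P(\widehat h)$ is invertible, $\widehat u=\mathcal P^{-1}(\widehat h)\widehat{q^x}$ and $\widehat v=\mathcal P^{-1}(\widehat h)\widehat{q^y}$. An entropy flux pair for a balance law $U_t+F_x+G_y=S$ is a triple $(E,H,K)$ of scalar functions with $E$ convex in the state such that smooth solutions satisfy $E_t+H_x+K_y=0$. *)

theory Defs
  imports "HOL-Analysis.Analysis"
begin

inductive poly_fun :: "(real^'d \<Rightarrow> real) \<Rightarrow> bool" where
  pf_const: "poly_fun (\<lambda>_. c)"
| pf_coord: "poly_fun (\<lambda>x. x $ i)"
| pf_add: "poly_fun p \<Longrightarrow> poly_fun q \<Longrightarrow> poly_fun (\<lambda>x. p x + q x)"
| pf_mult: "poly_fun p \<Longrightarrow> poly_fun q \<Longrightarrow> poly_fun (\<lambda>x. p x * q x)"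

definition density_all_moments :: "(real^'d \<Rightarrow> real) \<Rightarrow> bool" where
  "density_all_moments \<rho> \<longleftrightarrow>
     \<rho> \<in> borel_measurable lborel \<and> (\<forall>\<xi>. 0 \<le> \<rho> \<xi>) \<and>
     integrable lborel \<rho> \<and> (\<integral>\<xi>. \<rho> \<xi> \<partial>lborel) = 1 \<and>
     (\<forall>n::nat. integrable lborel (\<lambda>\<xi>. norm \<xi> ^ n * \<rho> \<xi>))"

(* phi_k, k ranging over the finite index type 'k (K = CARD('k)), orthonormal in L^2_rho *)
definition orthonormal_L2 :: "('k \<Rightarrow> real^'d \<Rightarrow> real) \<Rightarrow> (real^'d \<Rightarrow> real) \<Rightarrow> bool" where
  "orthonormal_L2 \<phi> \<rho> \<longleftrightarrow>
     (\<forall>l m. integrable lborel (\<lambda>\<xi>. \<phi> l \<xi> * \<phi> m \<xi> * \<rho> \<xi>) \<and>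
            (\<integral>\<xi>. \<phi> l \<xi> * \<phi> m \<xi> * \<rho> \<xi> \<partial>lborel) = (if l = m then 1 else 0))"

definition Mmat :: "('k \<Rightarrow> real^'d \<Rightarrow> real) \<Rightarrow> (real^'d \<Rightarrow> real) \<Rightarrow> 'k::finite \<Rightarrow> real^'k^'k" where
  "Mmat \<phi> \<rho> k = (\<chi> l m. \<integral>\<xi>. \<phi> k \<xi> * \<phi> l \<xi> * \<phi> m \<xi> * \<rho> \<xi> \<partial>lborel)"

definition Pmat :: "('k \<Rightarrow> real^'d \<Rightarrow> real) \<Rightarrow> (real^'d \<Rightarrow> real) \<Rightarrow> real^'k \<Rightarrow> real^'k^'k::finite" where
  "Pmat \<phi> \<rho> z = (\<Sum>k\<in>UNIV. z $ k *\<^sub>R Mmat \<phi> \<rho> k)"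

definition posdef :: "real^'k^'k \<Rightarrow> bool" where
  "posdef A \<longleftrightarrow> transpose A = A \<and> (\<forall>x. x \<noteq> 0 \<longrightarrow> x \<bullet> (A *v x) > 0)"

type_synonym 'k sg_state = "(real^'k) \<times> (real^'k) \<times> (real^'k)"  (* (h, q^x, q^y) *)

definition sgF :: "real \<Rightarrow> (real^'k \<Rightarrow> real^'k^'k::finite) \<Rightarrow> 'k sg_state \<Rightarrow> 'k sg_state" where
  "sgF g P W = (case W of (h, qx, qy) \<Rightarrow>
     (qx,
      P qx *v (matrix_inv (P h) *v qx) + (g / 2) *\<^sub>R (P h *v h),
      P qx *v (matrix_inv (P h) *v qy)))"

definition sgG :: "real \<Rightarrow> (real^'k \<Rightarrow> real^'k^'k::finite) \<Rightarrow> 'k sg_state \<Rightarrow> 'k sg_state" where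
  "sgG g P W = (case W of (h, qx, qy) \<Rightarrow>
     (qy,
      P qy *v (matrix_inv (P h) *v qx),
      P qy *v (matrix_inv (P h) *v qy) + (g / 2) *\<^sub>R (P h *v h)))"

(* source term, given the bottom derivatives Bx, By *)
definition sgS :: "real \<Rightarrow> (real^'k \<Rightarrow> real^'k^'k::finite) \<Rightarrow> 'k sg_state \<Rightarrow> real^'k \<Rightarrow> real^'k \<Rightarrow> 'k sg_state" where
  "sgS g P W Bx By = (case W of (h, qx, qy) \<Rightarrow>
     (0, - g *\<^sub>R (P h *v Bx), - g *\<^sub>R (P h *v By)))"

(* entropy E and entropy fluxes H, K; u = P(h)^{-1} q^x, v = P(h)^{-1} q^y; b = bottom vector *)
definition sgE :: "real \<Rightarrow> (real^'k \<Rightarrow> real^'k^'k::finite) \<Rightarrow> real^'k \<Rightarrow> 'k sg_state \<Rightarrow> real" where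
  "sgE g P b W = (case W of (h, qx, qy) \<Rightarrow>
     let u = matrix_inv (P h) *v qx; v = matrix_inv (P h) *v qy in
     (1/2) * (qx \<bullet> u + qy \<bullet> v) + (1/2) * g * (norm h)^2 + g * (h \<bullet> b))"

definition sgH :: "real \<Rightarrow> (real^'k \<Rightarrow> real^'k^'k::finite) \<Rightarrow> real^'k \<Rightarrow> 'k sg_state \<Rightarrow> real" where
  "sgH g P b W = (case W of (h, qx, qy) \<Rightarrow>
     let u = matrix_inv (P h) *v qx; v = matrix_inv (P h) *v qy in
     (1/2) * (u \<bullet> (P qx *v u) + v \<bullet> (P qx *v v)) + g * (qx \<bullet> (h + b)))"

definition sgK :: "real \<Rightarrow> (real^'k \<Rightarrow> real^'k^'k::finite) \<Rightarrow> real^'k \<Rightarrow> 'k sg_state \<Rightarrow> real" where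
  "sgK g P b W = (case W of (h, qx, qy) \<Rightarrow>
     let u = matrix_inv (P h) *v qx; v = matrix_inv (P h) *v qy in
     (1/2) * (v \<bullet> (P qy *v v) + u \<bullet> (P qy *v u)) + g * (qy \<bullet> (h + b)))"

end

theory Submission
  imports Defs
begin

(*
  Convexity: with A = P(h) the entropy is (1/2) q^x.A^-1 q^x + (1/2) q^y.A^-1 q^y plus a convex
  function of h, and (A, q) |-> q.A^-1 q is jointly convex on positive definite A, being the
  maximum over z of 2 z.q - z.A z, which is affine in (A, q).

  Entropy equality: the triple products int phi_k phi_l phi_m rho are fully symmetric, so P(a)
  is symmetric and P(a) b = P(b) a; nothing else about rho and the phi_k is used. With the
  entropy variable V = (g (h + B) - (1/2) (P(u) u + P(v) v), u, v), differentiation along any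
  path gives dE = V.dU, dH = V.dF + g q^x.dB and, by the reflection exchanging q^x and q^y,
  dK = V.dG + g q^y.dB. Hence E_t + H_x + K_y = V.(U_t + F_x + G_y) + g (q^x.B_x + q^y.B_y)
  = V.S + g (q^x.B_x + q^y.B_y) = 0. The velocities u = P(h)^-1 q^x, v = P(h)^-1 q^y are
  differentiable by Cramer's rule.
*)

section \<open>Positive definite matrices and convexity of the entropy\<close>

lemma invertible_matrix_inv_cancel:
  fixes A :: "real^'n^'n"
  assumes "invertible A"
  shows "A *v (matrix_inv A *v q) = q" and "matrix_inv A *v (A *v q) = q"
proof -
  have "A ** matrix_inv A = mat 1 \<and> matrix_inv A ** A = mat 1"
    using someI_ex[OF assms[unfolded invertible_def]] unfolding matrix_inv_def .
  then show "A *v (matrix_inv A *v q) = q" "matrix_inv A *v (A *v q) = q"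
    by (simp_all add: matrix_vector_mul_assoc)
qed

lemma symmetric_matrix_inner_commute:
  fixes A :: "real^'n^'n"
  assumes "transpose A = A"
  shows "z \<bullet> (A *v w) = w \<bullet> (A *v z)"
  by (metis assms dot_lmul_matrix inner_commute transpose_matrix_vector)

lemma posdef_invertible:
  fixes A :: "real^'n^'n"
  assumes "posdef A"
  shows "invertible A"
proof -
  have "A *v x = 0 \<Longrightarrow> x = 0" for x
    using assms unfolding posdef_def by (metis inner_zero_right less_irrefl)
  then show ?thesis
    using matrix_left_invertible_ker invertible_left_inverse by blast
qed

lemma convex_posdef: "convex {A :: real^'n^'n. posdef A}"
proof (rule convexI)
  fix A B :: "real^'n^'n" and u v :: real
  assume A: "A \<in> {A. posdef A}" and B: "B \<in> {A. posdef A}"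
    and uv: "0 \<le> u" "0 \<le> v" "u + v = 1"
  have "x \<bullet> ((u *\<^sub>R A + v *\<^sub>R B) *v x) > 0" if "x \<noteq> 0" for x
  proof -
    have "x \<bullet> (A *v x) > 0" "x \<bullet> (B *v x) > 0"
      using A B that by (auto simp: posdef_def)
    then have "u * (x \<bullet> (A *v x)) + v * (x \<bullet> (B *v x)) > 0"
      using uv by (cases "u = 0") (auto intro: add_pos_nonneg)
    then show ?thesis
      by (simp add: matrix_vector_mult_add_rdistrib inner_add_right
          flip: scaleR_matrix_vector_assoc)
  qed
  moreover have "transpose (u *\<^sub>R A + v *\<^sub>R B) = u *\<^sub>R A + v *\<^sub>R B"
    using A B by (simp add: posdef_def transpose_def vec_eq_iff)
  ultimately show "u *\<^sub>R A + v *\<^sub>R B \<in> {A. posdef A}"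
    by (simp add: posdef_def)
qed

lemma posdef_quadratic_le_matrix_inv:
  fixes A :: "real^'n^'n"
  assumes "posdef A"
  shows "2 * (z \<bullet> q) - z \<bullet> (A *v z) \<le> q \<bullet> (matrix_inv A *v q)"
proof -
  define w where "w = matrix_inv A *v q"
  have q: "q = A *v w"
    using posdef_invertible[OF assms] by (simp add: w_def invertible_matrix_inv_cancel)
  have sym: "transpose A = A"
    using assms by (simp add: posdef_def)
  have "0 \<le> (z - w) \<bullet> (A *v (z - w))"
    using assms unfolding posdef_def by (cases "z = w") (auto intro: less_imp_le)
  also have "\<dots> = z \<bullet> (A *v z) - 2 * (z \<bullet> q) + q \<bullet> w"
    using symmetric_matrix_inner_commute[OF sym, of w z]
    by (simp add: q matrix_vector_mult_diff_distrib inner_diff_left inner_diff_right inner_commute)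
  finally show ?thesis
    by (simp add: w_def)
qed

lemma convex_on_matrix_inv_quadratic:
  "convex_on {(A, q). posdef (A :: real^'n^'n)} (\<lambda>(A, q :: real^'n). q \<bullet> (matrix_inv A *v q))"
proof -
  have "{(A, q). posdef A} = {A :: real^'n^'n. posdef A} \<times> (UNIV :: (real^'n) set)"
    by auto
  then have convex: "convex {(A, q :: real^'n). posdef (A :: real^'n^'n)}"
    using convex_Times[OF convex_posdef convex_UNIV] by (simp only:)
  have "(u *\<^sub>R q1 + v *\<^sub>R q2) \<bullet> (matrix_inv (u *\<^sub>R A1 + v *\<^sub>R A2) *v (u *\<^sub>R q1 + v *\<^sub>R q2))
      \<le> u * (q1 \<bullet> (matrix_inv A1 *v q1)) + v * (q2 \<bullet> (matrix_inv A2 *v q2))"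
    if A1: "posdef A1" and A2: "posdef (A2 :: real^'n^'n)" and uv: "0 \<le> u" "0 \<le> v" "u + v = 1"
    for A1 A2 q1 q2 u v
  proof -
    define A where "A = u *\<^sub>R A1 + v *\<^sub>R A2"
    define q where "q = u *\<^sub>R q1 + v *\<^sub>R q2"
    define z where "z = matrix_inv A *v q"
    have "posdef A"
      using convexD[OF convex_posdef _ _ uv] A1 A2 by (simp add: A_def)
    then have "invertible A"
      by (rule posdef_invertible)
    then have "q \<bullet> (matrix_inv A *v q) = 2 * (z \<bullet> q) - z \<bullet> (A *v z)"
      by (simp add: z_def invertible_matrix_inv_cancel inner_commute)
    also have "\<dots> = u * (2 * (z \<bullet> q1) - z \<bullet> (A1 *v z)) + v * (2 * (z \<bullet> q2) - z \<bullet> (A2 *v z))"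
      by (simp add: A_def q_def matrix_vector_mult_add_rdistrib inner_add_right algebra_simps
          flip: scaleR_matrix_vector_assoc)
    also have "\<dots> \<le> u * (q1 \<bullet> (matrix_inv A1 *v q1)) + v * (q2 \<bullet> (matrix_inv A2 *v q2))"
      using posdef_quadratic_le_matrix_inv[OF A1, of z q1] posdef_quadratic_le_matrix_inv[OF A2, of z q2] uv
      by (intro add_mono mult_left_mono) auto
    finally show ?thesis
      by (simp add: A_def q_def)
  qed
  with convex show ?thesis
    unfolding convex_on_def by auto
qed

lemma convex_on_norm_power2: "convex_on UNIV (\<lambda>x :: 'a :: real_inner. (norm x)\<^sup>2)"
  unfolding convex_on_def
proof (intro conjI ballI allI impI convex_UNIV)
  fix x y :: 'a and u v :: real
  assume uv: "0 \<le> u" "0 \<le> v" "u + v = 1"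
  then have v: "v = 1 - u"
    by simp
  have "u * (norm x)\<^sup>2 + v * (norm y)\<^sup>2 - (norm (u *\<^sub>R x + v *\<^sub>R y))\<^sup>2 = u * v * (norm (x - y))\<^sup>2"
    unfolding power2_norm_eq_inner v
    by (simp add: inner_add_left inner_add_right inner_diff_left inner_diff_right
        inner_commute[of y x] algebra_simps)
  moreover have "0 \<le> u * v * (norm (x - y))\<^sup>2"
    using uv by simp
  ultimately show "(norm (u *\<^sub>R x + v *\<^sub>R y))\<^sup>2 \<le> u * (norm x)\<^sup>2 + v * (norm y)\<^sup>2"
    by linarith
qed

lemma convex_on_linear_comp:
  assumes "convex_on T f" and "linear L" and "convex S" and "L ` S \<subseteq> T"
  shows "convex_on S (\<lambda>x. f (L x))"
  using assms unfolding convex_on_def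
  by (auto simp: linear_add linear_cmul image_subset_iff convexD)

lemma convex_on_sgE:
  fixes P :: "real^'k \<Rightarrow> real^'k^'k::finite"
  assumes P: "linear P" and g: "0 \<le> g"
  shows "convex_on {W. posdef (P (fst W))} (sgE g P b)"
proof -
  let ?S = "{W :: 'k sg_state. posdef (P (fst W))}"
  let ?Q = "\<lambda>(A, q :: real^'k). q \<bullet> (matrix_inv A *v q)"
  have S: "convex ?S"
    using convex_linear_vimage[OF linear_compose[OF linear_fst P] convex_posdef]
    by (simp add: vimage_def o_def)
  have Qx: "convex_on ?S (\<lambda>W. ?Q (P (fst W), fst (snd W)))"
    by (rule convex_on_linear_comp[OF convex_on_matrix_inv_quadratic _ S])
       (auto intro!: linearI simp: linear_add[OF P] linear_cmul[OF P])
  have Qy: "convex_on ?S (\<lambda>W. ?Q (P (fst W), snd (snd W)))"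
    by (rule convex_on_linear_comp[OF convex_on_matrix_inv_quadratic _ S])
       (auto intro!: linearI simp: linear_add[OF P] linear_cmul[OF P])
  have N: "convex_on ?S (\<lambda>W. (norm (fst W))\<^sup>2)"
    by (rule convex_on_linear_comp[OF convex_on_norm_power2 linear_fst S]) simp
  have B: "convex_on ?S (\<lambda>W. fst W \<bullet> b)"
    by (rule convex_on_linear_comp[OF _ _ S, where f = "\<lambda>x. x" and T = UNIV])
       (auto simp: convex_on_ident inner_add_left intro!: linearI)
  have "sgE g P b = (\<lambda>W. 1/2 * ?Q (P (fst W), fst (snd W)) + 1/2 * ?Q (P (fst W), snd (snd W))
      + (1/2 * g) * (norm (fst W))\<^sup>2 + g * (fst W \<bullet> b))"
    by (simp add: sgE_def Let_def fun_eq_iff split_beta distrib_left)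
  then show ?thesis
    using g by (simp only:) (intro convex_on_add convex_on_cmul Qx Qy N B; simp)
qed

section \<open>Derivatives of matrix inverses\<close>

lemma bounded_bilinear_matrix_vector_mult:
  "bounded_bilinear (\<lambda>(A :: real^'n^'m) (x :: real^'n). A *v x)"
proof -
  have "bilinear (\<lambda>(A :: real^'n^'m) (x :: real^'n). A *v x)"
    unfolding bilinear_def
    by (auto intro!: linearI simp: matrix_vector_mult_add_rdistrib matrix_vector_right_distrib
        matrix_vector_mult_scaleR scaleR_matrix_vector_assoc)
  then show ?thesis
    by (simp add: bilinear_conv_bounded_bilinear)
qed

lemma has_vector_derivative_matrix_vector_mult:
  fixes A :: "real \<Rightarrow> real^'n^'m" and x :: "real \<Rightarrow> real^'n"
  assumes "(A has_vector_derivative A') (at s within S)" and "(x has_vector_derivative x') (at s within S)"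
  shows "((\<lambda>s. A s *v x s) has_vector_derivative A s *v x' + A' *v x s) (at s within S)"
  using bounded_bilinear.has_vector_derivative[OF bounded_bilinear_matrix_vector_mult assms] by simp

lemma has_real_derivative_inner:
  fixes x y :: "real \<Rightarrow> 'a :: real_inner"
  assumes "(x has_vector_derivative x') (at s within S)" and "(y has_vector_derivative y') (at s within S)"
  shows "((\<lambda>s. x s \<bullet> y s) has_real_derivative x s \<bullet> y' + x' \<bullet> y s) (at s within S)"
  using bounded_bilinear.has_vector_derivative[OF bounded_bilinear_inner assms]
  by (simp add: has_real_derivative_iff_has_vector_derivative)

lemma has_vector_derivative_Pair_iff:
  "((\<lambda>s. (f s, g s)) has_vector_derivative (f', g')) (at x within S) \<longleftrightarrow>
    (f has_vector_derivative f') (at x within S) \<and> (g has_vector_derivative g') (at x within S)"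
  using bounded_linear.has_vector_derivative[OF bounded_linear_fst, of "\<lambda>s. (f s, g s)" "(f', g')"]
    bounded_linear.has_vector_derivative[OF bounded_linear_snd, of "\<lambda>s. (f s, g s)" "(f', g')"]
  by (auto intro: has_vector_derivative_Pair)

lemma differentiable_vec_nth:
  "f differentiable (at x within S) \<Longrightarrow> (\<lambda>s. f s $ i) differentiable (at x within S)"
  by (rule differentiable_compose[of "\<lambda>v. v $ i"])
     (simp_all add: bounded_linear_imp_differentiable bounded_linear_vec_nth)

lemma differentiable_prod:
  fixes f :: "'i \<Rightarrow> 'a :: real_normed_vector \<Rightarrow> 'b :: real_normed_field"
  assumes "\<And>i. i \<in> I \<Longrightarrow> f i differentiable (at x within S)"
  shows "(\<lambda>s. \<Prod>i\<in>I. f i s) differentiable (at x within S)"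
proof -
  obtain D where "\<And>i. i \<in> I \<Longrightarrow> (f i has_derivative D i) (at x within S)"
    using assms unfolding differentiable_def by metis
  then show ?thesis
    unfolding differentiable_def by (blast intro: has_derivative_prod)
qed

lemma differentiable_det:
  fixes M :: "real \<Rightarrow> real^'n^'n"
  assumes "\<And>i j. (\<lambda>s. M s $ i $ j) differentiable (at x)"
  shows "(\<lambda>s. det (M s)) differentiable (at x)"
  unfolding det_def
  by (intro differentiable_sum ballI differentiable_mult differentiable_const differentiable_prod assms)
     (simp_all add: finite_permutations)

lemma eventually_invertible:
  fixes Y :: "real \<Rightarrow> real^'n^'n"
  assumes "Y differentiable (at x)" and "invertible (Y x)"
  shows "\<forall>\<^sub>F s in nhds x. invertible (Y s)"
proof -
  have "continuous (at x) (\<lambda>s. det (Y s))"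
    using differentiable_det[OF differentiable_vec_nth[OF differentiable_vec_nth[OF assms(1)]]]
    by (rule differentiable_imp_continuous_within)
  moreover have "det (Y x) \<noteq> 0"
    using assms(2) invertible_det_nz by blast
  ultimately obtain d where "d > 0" "\<And>s. dist x s < d \<Longrightarrow> det (Y s) \<noteq> 0"
    using continuous_at_avoid by blast
  then show ?thesis
    unfolding eventually_nhds_metric by (metis dist_commute invertible_det_nz)
qed

lemma matrix_inv_mult_cramer:
  fixes A :: "real^'n^'n"
  assumes "invertible A"
  shows "matrix_inv A *v q = (\<chi> k. det (\<chi> i j. if j = k then q $ i else A $ i $ j) / det A)"
  using cramer[of A "matrix_inv A *v q" q] assms
  by (simp add: invertible_det_nz invertible_matrix_inv_cancel)

lemma differentiable_matrix_inv_mult: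
  fixes Y :: "real \<Rightarrow> real^'n^'n" and q :: "real \<Rightarrow> real^'n"
  assumes Y: "Y differentiable (at x)" and q: "q differentiable (at x)" and inv: "invertible (Y x)"
  shows "(\<lambda>s. matrix_inv (Y s) *v q s) differentiable (at x)"
proof -
  define M where "M k s = (\<chi> i j. if j = k then q s $ i else Y s $ i $ j)" for k s
  have "(\<lambda>s. M k s $ i $ j) differentiable (at x)" for k i j
    using differentiable_vec_nth[OF differentiable_vec_nth[OF Y]] differentiable_vec_nth[OF q]
    by (cases "j = k") (simp_all add: M_def)
  moreover have "(\<lambda>s. Y s $ i $ j) differentiable (at x)" for i j
    using differentiable_vec_nth[OF differentiable_vec_nth[OF Y]] .
  moreover have "det (Y x) \<noteq> 0"
    using inv invertible_det_nz by blast
  ultimately have "(\<lambda>s. \<Sum>k\<in>UNIV. (det (M k s) / det (Y s)) *\<^sub>R axis k 1) differentiable (at x)"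
    by (intro differentiable_sum ballI differentiable_scaleR differentiable_divide differentiable_det
        differentiable_const) auto
  moreover have "(\<chi> k. c k) = (\<Sum>k\<in>UNIV. c k *\<^sub>R axis k (1 :: real))" for c :: "'n \<Rightarrow> real"
    using basis_expansion[of "\<chi> k. c k"] by (simp add: scalar_mult_eq_scaleR)
  ultimately have "(\<lambda>s. (\<chi> k. det (M k s) / det (Y s))) differentiable (at x)"
    by simp
  then obtain D where D: "((\<lambda>s. (\<chi> k. det (M k s) / det (Y s))) has_derivative D) (at x)"
    unfolding differentiable_def by blast
  have cramer_eq: "\<forall>\<^sub>F s in nhds x. (\<chi> k. det (M k s) / det (Y s)) = matrix_inv (Y s) *v q s"
    using eventually_invertible[OF Y inv]
    by eventually_elim (simp add: matrix_inv_mult_cramer M_def)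
  have "((\<lambda>s. matrix_inv (Y s) *v q s) has_derivative D) (at x)"
  proof (rule has_derivative_transform_eventually[OF D])
    show "\<forall>\<^sub>F s in at x. (\<chi> k. det (M k s) / det (Y s)) = matrix_inv (Y s) *v q s"
      using cramer_eq by (simp add: eventually_at_filter eventually_mono)
    show "(\<chi> k. det (M k x) / det (Y x)) = matrix_inv (Y x) *v q x"
      using cramer_eq by (rule eventually_nhds_x_imp_x)
  qed simp
  then show ?thesis
    unfolding differentiable_def by blast
qed

lemma has_vector_derivative_matrix_inv_mult:
  fixes Y :: "real \<Rightarrow> real^'n^'n" and q :: "real \<Rightarrow> real^'n"
  assumes Y: "(Y has_vector_derivative Y') (at x)" and q: "(q has_vector_derivative q') (at x)"
    and inv: "invertible (Y x)"
  shows "((\<lambda>s. matrix_inv (Y s) *v q s) has_vector_derivative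
      matrix_inv (Y x) *v (q' - Y' *v (matrix_inv (Y x) *v q x))) (at x)"
proof -
  define w where "w = (\<lambda>s. matrix_inv (Y s) *v q s)"
  obtain w' where w': "(w has_vector_derivative w') (at x)"
    using differentiable_matrix_inv_mult[OF differentiableI_vector[OF Y] differentiableI_vector[OF q] inv]
    unfolding w_def by (blast intro: vector_derivative_works[THEN iffD1])
  have solves: "\<forall>\<^sub>F s in nhds x. Y s *v w s = q s"
    using eventually_invertible[OF differentiableI_vector[OF Y] inv]
    by eventually_elim (simp add: w_def invertible_matrix_inv_cancel)
  then have "(q has_vector_derivative Y x *v w' + Y' *v w x) (at x)"
    using has_vector_derivative_matrix_vector_mult[OF Y w']
      has_vector_derivative_cong_ev[where S=UNIV and x=x and f="\<lambda>s. Y s *v w s" and g=q]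
      eventually_nhds_x_imp_x[OF solves]
    by (simp add: eventually_mono)
  then have "q' = Y x *v w' + Y' *v w x"
    using q vector_derivative_unique_at by blast
  then have "w' = matrix_inv (Y x) *v (q' - Y' *v w x)"
    using inv by (simp add: invertible_matrix_inv_cancel)
  with w' show ?thesis
    by (simp add: w_def)
qed

section \<open>Galerkin products\<close>

locale galerkin_product =
  fixes P :: "real^'k::finite \<Rightarrow> real^'k^'k"
  assumes P_linear: "linear P"
    and P_symmetric: "transpose (P a) = P a"
    and P_commute: "P a *v b = P b *v a"

lemma Mmat_swap:
  shows "Mmat \<phi> \<rho> k $ l $ m = Mmat \<phi> \<rho> m $ l $ k"
    and "Mmat \<phi> \<rho> k $ l $ m = Mmat \<phi> \<rho> k $ m $ l"
  unfolding Mmat_def by (simp_all add: mult_ac)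

lemma Pmat_entry: "Pmat \<phi> \<rho> z $ l $ m = (\<Sum>k\<in>UNIV. z $ k * Mmat \<phi> \<rho> k $ l $ m)"
  unfolding Pmat_def by (simp add: sum_component)

lemma galerkin_product_Pmat: "galerkin_product (Pmat \<phi> \<rho>)"
proof (rule galerkin_product.intro)
  show "linear (Pmat \<phi> \<rho>)"
    by (rule linearI) (simp_all add: Pmat_def scaleR_add_left sum.distrib scaleR_sum_right)
  show "transpose (Pmat \<phi> \<rho> a) = Pmat \<phi> \<rho> a" for a
    by (simp add: vec_eq_iff transpose_def Pmat_entry Mmat_swap(2)[of \<phi> \<rho> _ _])
  show "Pmat \<phi> \<rho> a *v b = Pmat \<phi> \<rho> b *v a" for a b
  proof -
    have "(Pmat \<phi> \<rho> a *v b) $ l = (Pmat \<phi> \<rho> b *v a) $ l" for l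
    proof -
      have "(Pmat \<phi> \<rho> a *v b) $ l = (\<Sum>m\<in>UNIV. \<Sum>k\<in>UNIV. a $ k * b $ m * Mmat \<phi> \<rho> k $ l $ m)"
        by (simp add: matrix_vector_mult_def Pmat_entry sum_distrib_left sum_distrib_right mult_ac)
      also have "\<dots> = (\<Sum>k\<in>UNIV. \<Sum>m\<in>UNIV. a $ k * b $ m * Mmat \<phi> \<rho> k $ l $ m)"
        by (rule sum.swap)
      also have "\<dots> = (\<Sum>k\<in>UNIV. \<Sum>m\<in>UNIV. b $ m * a $ k * Mmat \<phi> \<rho> m $ l $ k)"
        by (intro sum.cong refl) (subst Mmat_swap(1), simp)
      also have "\<dots> = (Pmat \<phi> \<rho> b *v a) $ l"
        by (simp add: matrix_vector_mult_def Pmat_entry sum_distrib_left sum_distrib_right mult_ac)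
      finally show ?thesis .
    qed
    then show ?thesis
      by (simp add: vec_eq_iff)
  qed
qed

section \<open>Entropy variables and the entropy flux identities\<close>

(* (P(u) u)_k = u^T M_k u, so the first component is g (h + b) - (1/2) (u^T M_k u + v^T M_k v)_k. *)
definition sg_entropy_variable ::
  "real \<Rightarrow> (real^'k \<Rightarrow> real^'k^'k::finite) \<Rightarrow> real^'k \<Rightarrow> 'k sg_state \<Rightarrow> 'k sg_state" where
  "sg_entropy_variable g P b W = (case W of (h, qx, qy) \<Rightarrow>
     let u = matrix_inv (P h) *v qx; v = matrix_inv (P h) *v qy in
     (g *\<^sub>R (h + b) - (1/2) *\<^sub>R (P u *v u + P v *v v), u, v))"

definition sg_swap :: "'k sg_state \<Rightarrow> 'k sg_state" where
  "sg_swap W = (case W of (h, qx, qy) \<Rightarrow> (h, qy, qx))"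

lemma sg_swap_simps [simp]:
  "sg_swap (h, qx, qy) = (h, qy, qx)"
  "sg_swap (sg_swap W) = W"
  "fst (sg_swap W) = fst W"
  "fst (snd (sg_swap W)) = snd (snd W)"
  "sg_swap X \<bullet> sg_swap Y = X \<bullet> Y"
  by (auto simp: sg_swap_def split: prod.splits)

lemma bounded_linear_sg_swap: "bounded_linear sg_swap"
  by (rule bounded_linear_intro[where K = 1]) (auto simp: sg_swap_def norm_Pair split: prod.splits)

lemma sgK_eq_sgH_swap: "sgK g P b W = sgH g P b (sg_swap W)"
  by (simp add: sgK_def sgH_def sg_swap_def Let_def add.commute split: prod.splits)

lemma sgG_eq_swap_sgF_swap: "sgG g P W = sg_swap (sgF g P (sg_swap W))"
  by (simp add: sgF_def sgG_def sg_swap_def split: prod.splits)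

lemma sg_entropy_variable_swap:
  "sg_entropy_variable g P b (sg_swap W) = sg_swap (sg_entropy_variable g P b W)"
  by (simp add: sg_entropy_variable_def sg_swap_def Let_def add.commute split: prod.splits)

lemma sg_path_cases:
  fixes W :: "real \<Rightarrow> 'k sg_state"
  obtains h qx qy where "W = (\<lambda>s. (h s, qx s, qy s))"
  using that[of "\<lambda>s. fst (W s)" "\<lambda>s. fst (snd (W s))" "\<lambda>s. snd (snd (W s))"] by simp

context galerkin_product
begin

lemma bounded_linear_P: "bounded_linear P"
  using P_linear linear_conv_bounded_linear by blast

lemma P_inner_commute: "c \<bullet> (P a *v b) = b \<bullet> (P a *v c)"
  by (rule symmetric_matrix_inner_commute[OF P_symmetric])

lemma P_inner_rotate: "u \<bullet> (P a *v u) = a \<bullet> (P u *v u)"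
  by (simp add: P_commute[of a u] P_inner_commute)

lemma has_vector_derivative_P:
  "(h has_vector_derivative h') F \<Longrightarrow> ((\<lambda>s. P (h s)) has_vector_derivative P h') F"
  by (rule bounded_linear.has_vector_derivative[OF bounded_linear_P])

lemma has_vector_derivative_velocity:
  assumes "(h has_vector_derivative h') (at s0)" and "(q has_vector_derivative q') (at s0)"
    and inv: "invertible (P (h s0))"
  obtains u' where "((\<lambda>s. matrix_inv (P (h s)) *v q s) has_vector_derivative u') (at s0)"
    and "P (h s0) *v u' = q' - P h' *v (matrix_inv (P (h s0)) *v q s0)"
  using has_vector_derivative_matrix_inv_mult[OF has_vector_derivative_P[OF assms(1)] assms(2) inv] that
  by (simp add: inv invertible_matrix_inv_cancel)

lemma has_real_derivative_sgE:
  assumes W: "(W has_vector_derivative W') (at s0)" and inv: "invertible (P (fst (W s0)))"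
  shows "((\<lambda>s. sgE g P b (W s)) has_real_derivative sg_entropy_variable g P b (W s0) \<bullet> W') (at s0)"
proof -
  obtain h qx qy where W_eq: "W = (\<lambda>s. (h s, qx s, qy s))"
    by (rule sg_path_cases)
  obtain h' qx' qy' where W'_eq: "W' = (h', qx', qy')"
    by (cases W')
  have hd: "(h has_vector_derivative h') (at s0)" and qxd: "(qx has_vector_derivative qx') (at s0)"
    and qyd: "(qy has_vector_derivative qy') (at s0)"
    using W by (simp_all add: W_eq W'_eq has_vector_derivative_Pair_iff)
  have inv_h: "invertible (P (h s0))"
    using inv by (simp add: W_eq)
  define u where "u = (\<lambda>s. matrix_inv (P (h s)) *v qx s)"
  define v where "v = (\<lambda>s. matrix_inv (P (h s)) *v qy s)"
  obtain u' where ud: "(u has_vector_derivative u') (at s0)" and Pu': "P (h s0) *v u' = qx' - P h' *v u s0"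
    unfolding u_def by (rule has_vector_derivative_velocity[OF hd qxd inv_h])
  obtain v' where vd: "(v has_vector_derivative v') (at s0)" and Pv': "P (h s0) *v v' = qy' - P h' *v v s0"
    unfolding v_def by (rule has_vector_derivative_velocity[OF hd qyd inv_h])
  have inner_deriv: "q \<bullet> w' = w \<bullet> q' - h' \<bullet> (P w *v w)"
    if "w = matrix_inv (P (h s0)) *v q" and "P (h s0) *v w' = q' - P h' *v w" for q q' w w'
  proof -
    have "q \<bullet> w' = w \<bullet> (P (h s0) *v w')"
      using P_inner_commute[of w' "h s0" w] that(1)
      by (simp add: inv_h invertible_matrix_inv_cancel inner_commute)
    also have "\<dots> = w \<bullet> q' - h' \<bullet> (P w *v w)"
      by (simp add: that(2) inner_diff_right P_inner_rotate)
    finally show ?thesis .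
  qed
  have qx_u': "qx s0 \<bullet> u' = u s0 \<bullet> qx' - h' \<bullet> (P (u s0) *v u s0)"
    by (rule inner_deriv) (simp_all add: u_def Pu')
  have qy_v': "qy s0 \<bullet> v' = v s0 \<bullet> qy' - h' \<bullet> (P (v s0) *v v s0)"
    by (rule inner_deriv) (simp_all add: v_def Pv')
  have V_eq: "sg_entropy_variable g P b (W s0) =
      (g *\<^sub>R (h s0 + b) - (1/2) *\<^sub>R (P (u s0) *v u s0 + P (v s0) *v v s0), u s0, v s0)"
    by (simp add: sg_entropy_variable_def W_eq u_def v_def Let_def)
  have E_eq: "(\<lambda>s. sgE g P b (W s)) =
      (\<lambda>s. 1/2 * (qx s \<bullet> u s + qy s \<bullet> v s) + 1/2 * g * (h s \<bullet> h s) + g * (h s \<bullet> b))"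
    by (simp add: sgE_def W_eq u_def v_def Let_def power2_norm_eq_inner)
  have "((\<lambda>s. 1/2 * (qx s \<bullet> u s + qy s \<bullet> v s) + 1/2 * g * (h s \<bullet> h s) + g * (h s \<bullet> b))
      has_real_derivative 1/2 * ((qx s0 \<bullet> u' + qx' \<bullet> u s0) + (qy s0 \<bullet> v' + qy' \<bullet> v s0))
        + 1/2 * g * (h s0 \<bullet> h' + h' \<bullet> h s0) + g * (h s0 \<bullet> 0 + h' \<bullet> b)) (at s0)"
    by (intro DERIV_add DERIV_cmult has_real_derivative_inner hd qxd qyd ud vd has_vector_derivative_const)
  moreover have "1/2 * ((qx s0 \<bullet> u' + qx' \<bullet> u s0) + (qy s0 \<bullet> v' + qy' \<bullet> v s0))
        + 1/2 * g * (h s0 \<bullet> h' + h' \<bullet> h s0) + g * (h s0 \<bullet> 0 + h' \<bullet> b)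
      = sg_entropy_variable g P b (W s0) \<bullet> W'"
    unfolding V_eq W'_eq qx_u' qy_v'
    by (simp add: inner_diff_left inner_add_left inner_add_right inner_commute algebra_simps)
  ultimately show ?thesis
    by (simp add: E_eq)
qed

(* Only the existence of u' and v' matters here: their contributions to H' and to V.F' coincide. *)
lemma has_real_derivative_sgH:
  assumes W: "(W has_vector_derivative W') (at s0)" and B: "(B has_vector_derivative B') (at s0)"
    and F: "((\<lambda>s. sgF g P (W s)) has_vector_derivative F') (at s0)"
    and inv: "invertible (P (fst (W s0)))"
  shows "((\<lambda>s. sgH g P (B s) (W s)) has_real_derivative
      sg_entropy_variable g P (B s0) (W s0) \<bullet> F' + g * (fst (snd (W s0)) \<bullet> B')) (at s0)"
proof -
  obtain h qx qy where W_eq: "W = (\<lambda>s. (h s, qx s, qy s))"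
    by (rule sg_path_cases)
  obtain h' qx' qy' where W'_eq: "W' = (h', qx', qy')"
    by (cases W')
  have hd: "(h has_vector_derivative h') (at s0)" and qxd: "(qx has_vector_derivative qx') (at s0)"
    and qyd: "(qy has_vector_derivative qy') (at s0)"
    using W by (simp_all add: W_eq W'_eq has_vector_derivative_Pair_iff)
  have inv_h: "invertible (P (h s0))"
    using inv by (simp add: W_eq)
  define u where "u = (\<lambda>s. matrix_inv (P (h s)) *v qx s)"
  define v where "v = (\<lambda>s. matrix_inv (P (h s)) *v qy s)"
  obtain u' where ud: "(u has_vector_derivative u') (at s0)"
    unfolding u_def by (rule has_vector_derivative_velocity[OF hd qxd inv_h])
  obtain v' where vd: "(v has_vector_derivative v') (at s0)"
    unfolding v_def by (rule has_vector_derivative_velocity[OF hd qyd inv_h])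
  have qx_eq: "qx s0 = P (h s0) *v u s0"
    by (simp add: u_def inv_h invertible_matrix_inv_cancel)
  have "((\<lambda>s. (qx s, P (qx s) *v u s + (g/2) *\<^sub>R (P (h s) *v h s), P (qx s) *v v s)) has_vector_derivative
      (qx', (P (qx s0) *v u' + P qx' *v u s0) + (g/2) *\<^sub>R (P (h s0) *v h' + P h' *v h s0),
       P (qx s0) *v v' + P qx' *v v s0)) (at s0)"
    by (intro has_vector_derivative_Pair has_vector_derivative_add qxd ud vd
        has_vector_derivative_matrix_vector_mult has_vector_derivative_P hd
        bounded_linear.has_vector_derivative[OF bounded_linear_scaleR_right])
  then have F'_eq: "F' = (qx', (P (qx s0) *v u' + P qx' *v u s0) + (g/2) *\<^sub>R (P (h s0) *v h' + P h' *v h s0),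
       P (qx s0) *v v' + P qx' *v v s0)"
    using F by (simp add: sgF_def W_eq u_def v_def vector_derivative_unique_at)
  have H_eq: "(\<lambda>s. sgH g P (B s) (W s)) =
      (\<lambda>s. 1/2 * (u s \<bullet> (P (qx s) *v u s) + v s \<bullet> (P (qx s) *v v s)) + g * (qx s \<bullet> (h s + B s)))"
    by (simp add: sgH_def W_eq u_def v_def Let_def)
  have "((\<lambda>s. 1/2 * (u s \<bullet> (P (qx s) *v u s) + v s \<bullet> (P (qx s) *v v s)) + g * (qx s \<bullet> (h s + B s)))
      has_real_derivative
        1/2 * ((u s0 \<bullet> (P (qx s0) *v u' + P qx' *v u s0) + u' \<bullet> (P (qx s0) *v u s0))
             + (v s0 \<bullet> (P (qx s0) *v v' + P qx' *v v s0) + v' \<bullet> (P (qx s0) *v v s0)))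
        + g * (qx s0 \<bullet> (h' + B') + qx' \<bullet> (h s0 + B s0))) (at s0)"
    by (intro DERIV_add DERIV_cmult has_real_derivative_inner has_vector_derivative_matrix_vector_mult
        has_vector_derivative_P has_vector_derivative_add qxd hd B ud vd)
  moreover have "1/2 * ((u s0 \<bullet> (P (qx s0) *v u' + P qx' *v u s0) + u' \<bullet> (P (qx s0) *v u s0))
             + (v s0 \<bullet> (P (qx s0) *v v' + P qx' *v v s0) + v' \<bullet> (P (qx s0) *v v s0)))
        + g * (qx s0 \<bullet> (h' + B') + qx' \<bullet> (h s0 + B s0))
      = sg_entropy_variable g P (B s0) (W s0) \<bullet> F' + g * (fst (snd (W s0)) \<bullet> B')"
  proof -
    have uh: "u s0 \<bullet> (P (h s0) *v h') = qx s0 \<bullet> h'"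
      using P_inner_commute[of "u s0" "h s0" h'] by (simp add: qx_eq inner_commute)
    then have uh': "u s0 \<bullet> (P h' *v h s0) = qx s0 \<bullet> h'"
      by (simp add: P_commute[of h'])
    have V_eq: "sg_entropy_variable g P (B s0) (W s0) =
        (g *\<^sub>R (h s0 + B s0) - (1/2) *\<^sub>R (P (u s0) *v u s0 + P (v s0) *v v s0), u s0, v s0)"
      by (simp add: sg_entropy_variable_def W_eq u_def v_def Let_def)
    show ?thesis
      unfolding V_eq F'_eq
      by (simp add: W_eq uh uh' P_inner_commute[of u'] P_inner_commute[of v']
          P_inner_rotate[of _ qx'] inner_add_left inner_add_right inner_diff_left inner_commute algebra_simps)
  qed
  ultimately show ?thesis
    by (simp add: H_eq)
qed

lemma has_real_derivative_sgK:
  assumes W: "(W has_vector_derivative W') (at s0)" and B: "(B has_vector_derivative B') (at s0)"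
    and G: "((\<lambda>s. sgG g P (W s)) has_vector_derivative G') (at s0)"
    and inv: "invertible (P (fst (W s0)))"
  shows "((\<lambda>s. sgK g P (B s) (W s)) has_real_derivative
      sg_entropy_variable g P (B s0) (W s0) \<bullet> G' + g * (snd (snd (W s0)) \<bullet> B')) (at s0)"
proof -
  have sW: "((\<lambda>s. sg_swap (W s)) has_vector_derivative sg_swap W') (at s0)"
    by (rule bounded_linear.has_vector_derivative[OF bounded_linear_sg_swap W])
  have sF: "((\<lambda>s. sgF g P (sg_swap (W s))) has_vector_derivative sg_swap G') (at s0)"
    using bounded_linear.has_vector_derivative[OF bounded_linear_sg_swap G]
    by (simp add: sgG_eq_swap_sgF_swap)
  have "invertible (P (fst (sg_swap (W s0))))"
    using inv by simp
  from has_real_derivative_sgH[OF sW B sF this] show ?thesis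
    by (simp add: sgK_eq_sgH_swap sg_entropy_variable_swap)
qed

lemma sg_entropy_variable_inner_sgS:
  assumes "invertible (P (fst W))"
  shows "sg_entropy_variable g P b W \<bullet> sgS g P W Bx By = - g * (fst (snd W) \<bullet> Bx + snd (snd W) \<bullet> By)"
proof -
  obtain h qx qy where W: "W = (h, qx, qy)"
    by (cases W)
  have "(matrix_inv (P h) *v q) \<bullet> (P h *v B) = q \<bullet> B" for q B
    using assms P_inner_commute[of B h "matrix_inv (P h) *v q"]
    by (simp add: W invertible_matrix_inv_cancel inner_commute)
  then show ?thesis
    by (simp add: W sg_entropy_variable_def sgS_def Let_def inner_minus_right algebra_simps)
qed

lemma entropy_equality_at:
  assumes Ux: "((\<lambda>s. U s y t) has_vector_derivative Ux) (at x)"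
    and Uy: "((\<lambda>s. U x s t) has_vector_derivative Uy) (at y)"
    and Ut: "((\<lambda>s. U x y s) has_vector_derivative Ut) (at t)"
    and Bx: "((\<lambda>s. B s y) has_vector_derivative Bx) (at x)"
    and By: "((\<lambda>s. B x s) has_vector_derivative By) (at y)"
    and Fx: "((\<lambda>s. sgF g P (U s y t)) has_vector_derivative Fx) (at x)"
    and Gy: "((\<lambda>s. sgG g P (U x s t)) has_vector_derivative Gy) (at y)"
    and balance: "Ut + Fx + Gy = sgS g P (U x y t) Bx By"
    and inv: "invertible (P (fst (U x y t)))"
  shows "\<exists>Et Hx Ky.
      ((\<lambda>s. sgE g P (B x y) (U x y s)) has_real_derivative Et) (at t) \<and>
      ((\<lambda>s. sgH g P (B s y) (U s y t)) has_real_derivative Hx) (at x) \<and>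
      ((\<lambda>s. sgK g P (B x s) (U x s t)) has_real_derivative Ky) (at y) \<and>
      Et + Hx + Ky = 0"
proof -
  let ?V = "sg_entropy_variable g P (B x y) (U x y t)"
  have Et: "((\<lambda>s. sgE g P (B x y) (U x y s)) has_real_derivative ?V \<bullet> Ut) (at t)"
    using has_real_derivative_sgE[OF Ut] inv by simp
  have Hx: "((\<lambda>s. sgH g P (B s y) (U s y t)) has_real_derivative
      ?V \<bullet> Fx + g * (fst (snd (U x y t)) \<bullet> Bx)) (at x)"
    using has_real_derivative_sgH[OF Ux Bx Fx] inv by simp
  have Ky: "((\<lambda>s. sgK g P (B x s) (U x s t)) has_real_derivative
      ?V \<bullet> Gy + g * (snd (snd (U x y t)) \<bullet> By)) (at y)"
    using has_real_derivative_sgK[OF Uy By Gy] inv by simp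
  have "?V \<bullet> Ut + (?V \<bullet> Fx + g * (fst (snd (U x y t)) \<bullet> Bx))
      + (?V \<bullet> Gy + g * (snd (snd (U x y t)) \<bullet> By))
    = ?V \<bullet> (Ut + Fx + Gy) + g * (fst (snd (U x y t)) \<bullet> Bx + snd (snd (U x y t)) \<bullet> By)"
    by (simp add: inner_add_right algebra_simps)
  also have "\<dots> = 0"
    by (simp add: balance sg_entropy_variable_inner_sgS[OF inv])
  finally show ?thesis
    using Et Hx Ky by blast
qed

end

theorem theorem3p1:
  fixes \<rho> :: "real^'d \<Rightarrow> real"
    and \<phi> :: "'k::finite \<Rightarrow> real^'d \<Rightarrow> real"
    and k1 :: 'k
    and g :: real
    and S :: "(real \<times> real \<times> real) set"
    and U Ux Uy Ut :: "real \<Rightarrow> real \<Rightarrow> real \<Rightarrow> 'k sg_state"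
    and B Bx By :: "real \<Rightarrow> real \<Rightarrow> real^'k"
  assumes rho: "density_all_moments \<rho>"
    and poly: "\<forall>k. poly_fun (\<phi> k)"
    and phi1: "\<phi> k1 = (\<lambda>_. 1)"
    and orth: "orthonormal_L2 \<phi> \<rho>"
    and g_pos: "g > 0"
    and S_open: "open S"
    and U_diff: "\<forall>x y t. (x, y, t) \<in> S \<longrightarrow>
        ((\<lambda>s. U s y t) has_vector_derivative Ux x y t) (at x) \<and>
        ((\<lambda>s. U x s t) has_vector_derivative Uy x y t) (at y) \<and>
        ((\<lambda>s. U x y s) has_vector_derivative Ut x y t) (at t)"
    and B_diff: "\<forall>x y t. (x, y, t) \<in> S \<longrightarrow>
        ((\<lambda>s. B s y) has_vector_derivative Bx x y) (at x) \<and>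
        ((\<lambda>s. B x s) has_vector_derivative By x y) (at y)"
    and pos_def: "\<forall>x y t. (x, y, t) \<in> S \<longrightarrow> posdef (Pmat \<phi> \<rho> (fst (U x y t)))"
    and sg_pde: "\<forall>x y t. (x, y, t) \<in> S \<longrightarrow>
        (\<exists>Fx Gy.
           ((\<lambda>s. sgF g (Pmat \<phi> \<rho>) (U s y t)) has_vector_derivative Fx) (at x) \<and>
           ((\<lambda>s. sgG g (Pmat \<phi> \<rho>) (U x s t)) has_vector_derivative Gy) (at y) \<and>
           Ut x y t + Fx + Gy = sgS g (Pmat \<phi> \<rho>) (U x y t) (Bx x y) (By x y))"
  shows "(\<forall>b. convex_on {W. posdef (Pmat \<phi> \<rho> (fst W))} (sgE g (Pmat \<phi> \<rho>) b)) \<and>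
         (\<forall>x y t. (x, y, t) \<in> S \<longrightarrow>
            (\<exists>Et Hx Ky.
               ((\<lambda>s. sgE g (Pmat \<phi> \<rho>) (B x y) (U x y s)) has_real_derivative Et) (at t) \<and>
               ((\<lambda>s. sgH g (Pmat \<phi> \<rho>) (B s y) (U s y t)) has_real_derivative Hx) (at x) \<and>
               ((\<lambda>s. sgK g (Pmat \<phi> \<rho>) (B x s) (U x s t)) has_real_derivative Ky) (at y) \<and>
               Et + Hx + Ky = 0))"
proof -
  interpret galerkin_product "Pmat \<phi> \<rho>"
    by (rule galerkin_product_Pmat)
  show ?thesis
  proof (intro conjI allI impI)
    show "convex_on {W. posdef (Pmat \<phi> \<rho> (fst W))} (sgE g (Pmat \<phi> \<rho>) b)" for b
      using convex_on_sgE[OF P_linear] g_pos by simp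
  qed (use sg_pde U_diff B_diff pos_def in \<open>blast intro: entropy_equality_at posdef_invertible\<close>)
qed

end
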